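(* Place the almost positive roots of type $C_n$ in the off-diagonal entries of an $(n+1)\times(n+1)$ array via: entry $(1,j)$ ($2\le j\le n+1$) is $-\alpha_{j-1}$; entry $(i,j)$ with $2\le i<j$ is $\varepsilon_{i-1}-\varepsilon_{j-1}$; entry $(i,j)$ with $i>j$ is $\varepsilon_j+\varepsilon_{i-1}$. Let $i,j,k,l\in[1,n+1]$ be pairwise distinct with $i<k$ and $j<l$. Then the $(i,j)$-entry is $\underline c$-compatible with the $(k,l)$-entry if and only if the $(i,l)$-entry is not $\underline c$-compatible with the $(k,j)$-entry.
   Context: Type $C_n$: standard basis $\varepsilon_i$ of $\mathbb{R}^n$, simple roots $\alpha_i=\varepsilon_i-\varepsilon_{i+1}$ ($i<n$), $\alpha_n=2\varepsilon_n$, $\Pi$ the simple roots, $\Phi_+=\{\varepsilon_i\pm\varepsilon_j:i<j\}\cup\{2\varepsilon_i\}$, $\Phi_{\ge-1}=\Phi_+\sqcup(-\Pi)$. With simple reflections $s_i$ and $c=s_1\cdots s_n$, $\tau:\Phi_{\ge-1}\to\Phi_{\ge-1}$ is $\tau(-\alpha_i)=s_1\cdots s_{i-1}(\alpha_i)$, $\tau(s_n\cdots s_{i+1}(\alpha_i))=-\alpha_i$, $\tau(\alpha)=c(\alpha)$ otherwise. The $\underline c$-compatibility degree is the unique $\tau$-invariant function $\Phi_{\ge-1}^2\to\mathbb{Z}$ with $(-\alpha\|_{\underline c}-\alpha')=0$ for $\alpha,\alpha'\in\Pi$ and $(-\alpha\|_{\underline c}\beta)=[\beta:\alpha]$ (coefficient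 of $\alpha$ in $\beta$) for $\alpha\in\Pi,\beta\in\Phi_+$; two roots are $\underline c$-compatible if their degree is $0$. *)

theory Defs
  imports Complex_Main "HOL-Library.Function_Algebras"
begin

text \<open>Vectors of R^n are encoded as functions nat => real, with coordinates
  indexed by 1..n and value 0 at every other index.\<close>

type_synonym vec = "nat \<Rightarrow> real"

definition smul :: "real \<Rightarrow> vec \<Rightarrow> vec" where
  "smul c v = (\<lambda>k. c * v k)"

definition eps :: "nat \<Rightarrow> vec" where
  "eps i = (\<lambda>k. if k = i then 1 else 0)"

definition alpha :: "nat \<Rightarrow> nat \<Rightarrow> vec" where
  "alpha n i = (if i < n then eps i - eps (i + 1) else smul 2 (eps n))"

definition simple_roots :: "nat \<Rightarrow> vec set" where
  "simple_roots n = alpha n ` {1..n}"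

definition pos_roots :: "nat \<Rightarrow> vec set" where
  "pos_roots n =
     {eps i - eps j | i j. 1 \<le> i \<and> i < j \<and> j \<le> n}
   \<union> {eps i + eps j | i j. 1 \<le> i \<and> i < j \<and> j \<le> n}
   \<union> {smul 2 (eps i) | i. 1 \<le> i \<and> i \<le> n}"

definition almost_pos_roots :: "nat \<Rightarrow> vec set" where
  "almost_pos_roots n = pos_roots n \<union> uminus ` simple_roots n"

definition dotp :: "nat \<Rightarrow> vec \<Rightarrow> vec \<Rightarrow> real" where
  "dotp n u v = (\<Sum>k\<in>{1..n}. u k * v k)"

definition refl :: "nat \<Rightarrow> vec \<Rightarrow> vec \<Rightarrow> vec" where
  "refl n a v = v - smul (2 * dotp n v a / dotp n a a) a"

definition sref :: "nat \<Rightarrow> nat \<Rightarrow> vec \<Rightarrow> vec" where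
  "sref n i = refl n (alpha n i)"

definition sprod :: "nat \<Rightarrow> nat list \<Rightarrow> vec \<Rightarrow> vec" where
  "sprod n xs = foldr (\<lambda>i f. sref n i \<circ> f) xs id"

definition cox :: "nat \<Rightarrow> vec \<Rightarrow> vec" where
  "cox n = sprod n [1..<n+1]"

definition tau :: "nat \<Rightarrow> vec \<Rightarrow> vec" where
  "tau n b =
    (if \<exists>i\<in>{1..n}. b = - alpha n i then
       (let i = (SOME i. i \<in> {1..n} \<and> b = - alpha n i) in sprod n [1..<i] (alpha n i))
     else if \<exists>i\<in>{1..n}. b = sprod n (rev [i+1..<n+1]) (alpha n i) then
       (let i = (SOME i. i \<in> {1..n} \<and> b = sprod n (rev [i+1..<n+1]) (alpha n i)) in - alpha n i)
     else cox n b)"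

definition root_coeff :: "nat \<Rightarrow> vec \<Rightarrow> nat \<Rightarrow> int" where
  "root_coeff n b i =
     (THE c :: nat \<Rightarrow> int. (\<forall>k. k \<notin> {1..n} \<longrightarrow> c k = 0) \<and>
        b = (\<Sum>k\<in>{1..n}. smul (of_int (c k)) (alpha n k))) i"

definition compat_deg :: "nat \<Rightarrow> vec \<Rightarrow> vec \<Rightarrow> int" where
  "compat_deg n = (THE f :: vec \<Rightarrow> vec \<Rightarrow> int.
      (\<forall>x\<in>almost_pos_roots n. \<forall>y\<in>almost_pos_roots n. f (tau n x) (tau n y) = f x y)
    \<and> (\<forall>a\<in>simple_roots n. \<forall>a'\<in>simple_roots n. f (- a) (- a') = 0)
    \<and> (\<forall>i\<in>{1..n}. \<forall>b\<in>pos_roots n. f (- alpha n i) b = root_coeff n b i)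
    \<and> (\<forall>x y. x \<notin> almost_pos_roots n \<or> y \<notin> almost_pos_roots n \<longrightarrow> f x y = 0))"

definition compatible :: "nat \<Rightarrow> vec \<Rightarrow> vec \<Rightarrow> bool" where
  "compatible n x y \<longleftrightarrow> compat_deg n x y = 0"

definition entry :: "nat \<Rightarrow> nat \<Rightarrow> nat \<Rightarrow> vec" where
  "entry n i j =
     (if i = 1 then - alpha n (j - 1)
      else if i < j then eps (i - 1) - eps (j - 1)
      else eps j + eps (i - 1))"

end

theory Submission
  imports Defs "HOL-Combinatorics.Transposition"
begin

text \<open>Every almost positive root occurs exactly once in the array, and \<open>\<tau>\<close> acts on the array
  by shifting both indices cyclically modulo \<open>n + 1\<close>. A \<open>\<tau>\<close>-invariant degree is therefore
  determined by its values with first argument in the first row, i.e. by the initial conditions: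
  rotating row \<open>i\<close> to the first row turns the \<open>(i, j)\<close>-entry into \<open>-\<alpha>\<^sub>m\<close>, \<open>m\<close> the
  cyclic distance from \<open>i\<close> to \<open>j\<close>, and the degree becomes the coefficient of \<open>\<alpha>\<^sub>m\<close> in the
  rotated \<open>(k, l)\<close>-entry. Conversely this formula is \<open>\<tau>\<close>-invariant and satisfies the initial
  conditions, so it is the compatibility degree. The coefficients of \<open>\<epsilon>\<^sub>p \<plusminus> \<epsilon>\<^sub>q\<close> are explicit,
  and the exchange property becomes a case distinction on the relative order of the cyclic
  distances from \<open>i\<close> to \<open>j\<close>, \<open>k\<close> and \<open>l\<close>.\<close>

section \<open>Coordinates in the basis of simple roots\<close>

lemma sum_fun_apply: "(\<Sum>k\<in>A. f k :: 'a \<Rightarrow> 'b::comm_monoid_add) t = (\<Sum>k\<in>A. f k t)"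
  by (induction A rule: infinite_finite_induct) auto

lemma smul_two: "smul 2 v = v + v"
  by (rule ext) (simp add: smul_def)

text \<open>Since \<open>\<alpha>\<^sub>k = \<epsilon>\<^sub>k - \<epsilon>\<^sub>k\<^sub>+\<^sub>1\<close> for \<open>k < n\<close> and \<open>\<alpha>\<^sub>n = 2\<epsilon>\<^sub>n\<close>, prefix sums of coordinates read off
  coefficients in the basis of simple roots (\<open>prefix_sum_root_comb\<close>).\<close>

definition prefix_sum :: "vec \<Rightarrow> nat \<Rightarrow> real" where
  "prefix_sum v m = (\<Sum>t\<in>{1..m}. v t)"

lemma prefix_sum_eps: "prefix_sum (eps a) m = (if 1 \<le> a \<and> a \<le> m then 1 else 0)"
  unfolding prefix_sum_def eps_def by (simp add: sum.delta)

lemma prefix_sum_diff: "prefix_sum (u - v) m = prefix_sum u m - prefix_sum v m"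
  and prefix_sum_add: "prefix_sum (u + v) m = prefix_sum u m + prefix_sum v m"
  and prefix_sum_uminus: "prefix_sum (- u) m = - prefix_sum u m"
  and prefix_sum_smul: "prefix_sum (smul c u) m = c * prefix_sum u m"
  unfolding prefix_sum_def smul_def
  by (simp_all add: sum_subtractf sum.distrib sum_negf sum_distrib_left)

lemma prefix_sum_sum: "prefix_sum (\<Sum>k\<in>A. f k) m = (\<Sum>k\<in>A. prefix_sum (f k) m)"
  unfolding prefix_sum_def sum_fun_apply by (rule sum.swap)

lemma prefix_sum_alpha:
  "1 \<le> k \<Longrightarrow> k \<le> n \<Longrightarrow> prefix_sum (alpha n k) m =
    (if k < n then (if k = m then 1 else 0) else (if n \<le> m then 2 else 0))"
  unfolding alpha_def by (auto simp: prefix_sum_diff prefix_sum_eps prefix_sum_smul)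

lemma prefix_sum_root_comb:
  assumes "m \<in> {1..n}"
  shows "prefix_sum (\<Sum>k\<in>{1..n}. smul (of_int (c k)) (alpha n k)) m =
    (if m < n then of_int (c m) else 2 * of_int (c n))"
proof -
  have "prefix_sum (\<Sum>k\<in>{1..n}. smul (of_int (c k)) (alpha n k)) m =
      (\<Sum>k\<in>{1..n}. if m < n then (if k = m then of_int (c m) else 0)
                       else (if k = n then 2 * of_int (c n) else 0))"
    unfolding prefix_sum_sum prefix_sum_smul using assms by (intro sum.cong) (auto simp: prefix_sum_alpha)
  then show ?thesis
    using assms by simp
qed

lemma vec_eq_if_prefix_sums_eq:
  assumes "\<And>t. t \<notin> {1..n} \<Longrightarrow> u t = 0" "\<And>t. t \<notin> {1..n} \<Longrightarrow> v t = 0"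
    and "\<And>m. m \<in> {1..n} \<Longrightarrow> prefix_sum u m = prefix_sum v m"
  shows "u = v"
proof
  have prefix_eq: "prefix_sum u m = prefix_sum v m" if "m \<le> n" for m
    using that assms(3)[of m] by (cases "m = 0") (auto simp: prefix_sum_def)
  have step: "w t = prefix_sum w t - prefix_sum w (t - 1)" if "1 \<le> t" for w t
    using that by (cases t) (auto simp: prefix_sum_def sum.cl_ivl_Suc)
  show "u t = v t" for t
  proof (cases "t \<in> {1..n}")
    case True
    then have "prefix_sum u t = prefix_sum v t" "prefix_sum u (t - 1) = prefix_sum v (t - 1)"
      using prefix_eq by auto
    then show ?thesis
      using True step[of t u] step[of t v] by simp
  qed (use assms in simp)
qed

lemma root_comb_vanishes_outside:
  "t \<notin> {1..n} \<Longrightarrow> (\<Sum>k\<in>{1..n}. smul (of_int (c k)) (alpha n k)) t = 0"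
  unfolding sum_fun_apply by (rule sum.neutral) (auto simp: eps_def alpha_def smul_def)

lemma root_comb_coeffs_unique:
  assumes c: "\<forall>k. k \<notin> {1..n} \<longrightarrow> c k = 0" and c': "\<forall>k. k \<notin> {1..n} \<longrightarrow> c' k = 0"
    and eq: "(\<Sum>k\<in>{1..n}. smul (of_int (c k)) (alpha n k)) = (\<Sum>k\<in>{1..n}. smul (of_int (c' k)) (alpha n k))"
  shows "c = c'"
proof
  fix k
  show "c k = c' k"
  proof (cases "k \<in> {1..n}")
    case True
    then have "(if k < n then of_int (c k) else 2 * of_int (c n) :: real) =
        (if k < n then of_int (c' k) else 2 * of_int (c' n))"
      using eq prefix_sum_root_comb[OF True] by metis
    then show ?thesis
      using True by (auto split: if_splits)
  qed (use c c' in auto)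
qed

lemma root_coeff_eqI:
  assumes "\<forall>k. k \<notin> {1..n} \<longrightarrow> c k = 0" and "b = (\<Sum>k\<in>{1..n}. smul (of_int (c k)) (alpha n k))"
  shows "root_coeff n b = c"
  unfolding root_coeff_def using assms root_comb_coeffs_unique[of n _ c] by (intro the_equality) auto

lemma root_coeff_eqI_prefix_sums:
  assumes "\<forall>k. k \<notin> {1..n} \<longrightarrow> c k = 0" and "\<And>t. t \<notin> {1..n} \<Longrightarrow> v t = 0"
    and "\<And>m. m \<in> {1..n} \<Longrightarrow> prefix_sum v m = (if m < n then of_int (c m) else 2 * of_int (c n))"
  shows "root_coeff n v = c"
proof (rule root_coeff_eqI[OF assms(1)])
  show "v = (\<Sum>k\<in>{1..n}. smul (of_int (c k)) (alpha n k))"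
    by (rule vec_eq_if_prefix_sums_eq) (use assms prefix_sum_root_comb root_comb_vanishes_outside in auto)
qed

lemma root_coeff_eps_diff:
  "1 \<le> p \<Longrightarrow> p < q \<Longrightarrow> q \<le> n \<Longrightarrow> root_coeff n (eps p - eps q) = (\<lambda>m. of_bool (p \<le> m \<and> m < q))"
  by (rule root_coeff_eqI_prefix_sums) (auto simp: prefix_sum_diff prefix_sum_eps, auto simp: eps_def)

lemma root_coeff_eps_add:
  "1 \<le> p \<Longrightarrow> p \<le> q \<Longrightarrow> q \<le> n \<Longrightarrow> root_coeff n (eps p + eps q) =
    (\<lambda>m. if m \<in> {1..n} then (if m < n then of_bool (p \<le> m) + of_bool (q \<le> m) else 1) else 0)"
  by (rule root_coeff_eqI_prefix_sums) (auto simp: prefix_sum_add prefix_sum_eps, auto simp: eps_def)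

lemma alpha_inj:
  assumes "k \<in> {1..n}" "k' \<in> {1..n}" "alpha n k = alpha n k'"
  shows "k = k'"
proof -
  have "prefix_sum (alpha n k) k = prefix_sum (alpha n k') k"
    using assms(3) by simp
  then show ?thesis
    using assms(1,2) prefix_sum_alpha[of k n k] prefix_sum_alpha[of k' n k] by (auto split: if_splits)
qed

lemma neq_neg_alpha_if_prefix_sums_nonneg:
  assumes "\<And>m. 0 \<le> prefix_sum v m" "i \<in> {1..n}"
  shows "v \<noteq> - alpha n i"
proof
  assume "v = - alpha n i"
  then have "prefix_sum v i < 0"
    using assms(2) by (auto simp: prefix_sum_uminus prefix_sum_alpha)
  then show False
    using assms(1)[of i] by simp
qed

section \<open>Simple reflections and \<open>\<tau>\<close> on the standard basis\<close>

lemma dotp_eps: "dotp n v (eps a) = (if a \<in> {1..n} then v a else 0)"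
  unfolding dotp_def eps_def by (simp add: sum.delta if_distrib cong: if_cong)

lemma dotp_diff: "dotp n v (a - b) = dotp n v a - dotp n v b"
  and dotp_smul: "dotp n v (smul c a) = c * dotp n v a"
  unfolding dotp_def smul_def by (simp_all add: sum_subtractf sum_distrib_left algebra_simps)

lemma refl_diff: "refl n a (u - v) = refl n a u - refl n a v"
  and refl_add: "refl n a (u + v) = refl n a u + refl n a v"
  and refl_uminus: "refl n a (- u) = - refl n a u"
  and refl_smul: "refl n a (smul c u) = smul c (refl n a u)"
  by (rule ext; simp add: refl_def dotp_def smul_def sum_subtractf sum.distrib sum_negf
      sum_distrib_left algebra_simps add_divide_distrib diff_divide_distrib)+

lemma sref_eq_comp_transpose:
  assumes "1 \<le> m" "m < n"
  shows "sref n m v = v \<circ> transpose m (m + 1)"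
proof -
  have "dotp n (alpha n m) (alpha n m) = 2"
    using assms by (simp add: alpha_def dotp_diff dotp_eps) (simp add: eps_def)
  moreover have "dotp n v (alpha n m) = v m - v (m + 1)"
    using assms by (simp add: alpha_def dotp_diff dotp_eps)
  ultimately show ?thesis
    using assms unfolding sref_def refl_def
    by (intro ext) (auto simp: alpha_def smul_def eps_def transpose_def field_simps)
qed

lemma sref_last:
  assumes "1 \<le> n"
  shows "sref n n v = v(n := - v n)"
proof -
  have "dotp n (alpha n n) (alpha n n) = 4"
    using assms by (simp add: alpha_def dotp_smul dotp_eps) (simp add: eps_def smul_def)
  moreover have "dotp n v (alpha n n) = 2 * v n"
    using assms by (simp add: alpha_def dotp_smul dotp_eps)
  ultimately show ?thesis
    unfolding sref_def refl_def by (intro ext) (auto simp: alpha_def smul_def eps_def)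
qed

lemma sref_eps_transpose: "1 \<le> m \<Longrightarrow> m < n \<Longrightarrow> sref n m (eps a) = eps (transpose m (m + 1) a)"
  by (auto simp: sref_eq_comp_transpose eps_def transpose_def)

lemma sref_last_eps: "1 \<le> n \<Longrightarrow> sref n n (eps a) = (if a = n then - eps n else eps a)"
  by (auto simp: sref_last eps_def)

lemma sprod_Nil: "sprod n [] = id"
  and sprod_Cons: "sprod n (x # xs) = sref n x \<circ> sprod n xs"
  by (simp_all add: sprod_def)

lemma sprod_append: "sprod n (xs @ ys) = sprod n xs \<circ> sprod n ys"
  unfolding sprod_def by (induction xs) auto

lemma sprod_diff: "sprod n xs (u - v) = sprod n xs u - sprod n xs v"
  and sprod_add: "sprod n xs (u + v) = sprod n xs u + sprod n xs v"
  and sprod_uminus: "sprod n xs (- u) = - sprod n xs u"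
  and sprod_smul: "sprod n xs (smul c u) = smul c (sprod n xs u)"
  by (induction xs) (simp_all add: sprod_Nil sprod_Cons sref_def refl_diff refl_add refl_uminus refl_smul)

lemma sprod_upt_eps:
  assumes "1 \<le> q" "q \<le> n"
  shows "sprod n [1..<q] (eps a) = eps (if a = q then 1 else if 1 \<le> a \<and> a < q then a + 1 else a)"
  using assms
proof (induction q arbitrary: a rule: nat_induct_at_least)
  case base
  then show ?case by (auto simp: sprod_Nil)
next
  case (Suc q)
  have "sprod n [1..<Suc q] (eps a) = sprod n [1..<q] (eps (transpose q (q + 1) a))"
    using Suc.hyps Suc.prems by (simp add: sprod_append sprod_Cons sprod_Nil sref_eps_transpose)
  then show ?case
    using Suc by (auto simp: transpose_def)
qed

lemma sprod_rev_upt_eps: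
  assumes "1 \<le> p" "p \<le> n"
  shows "sprod n (rev [p..<n+1]) (eps a) =
    (if a = p then - eps n else eps (if p < a \<and> a \<le> n then a - 1 else a))"
  using assms
proof (induction "n - p" arbitrary: p a)
  case 0
  then have "p = n" by simp
  then show ?case
    using 0 by (simp add: sprod_Cons sprod_Nil sref_last_eps)
next
  case (Suc d)
  have p: "Suc p \<le> n" "d = n - Suc p"
    using Suc by auto
  have IH: "sprod n (rev [Suc p..<n+1]) (eps b) =
      (if b = Suc p then - eps n else eps (if Suc p < b \<and> b \<le> n then b - 1 else b))" for b
    using Suc.hyps(1)[OF p(2)] p by simp
  have "rev [p..<n+1] = rev [Suc p..<n+1] @ [p]"
    using Suc by (simp add: upt_rec)
  then have "sprod n (rev [p..<n+1]) (eps a) = sprod n (rev [Suc p..<n+1]) (eps (transpose p (p + 1) a))"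
    using Suc by (simp add: sprod_append sprod_Cons sprod_Nil sref_eps_transpose)
  then show ?case
    unfolding IH using Suc by (auto simp: transpose_def)
qed

lemma cox_diff: "cox n (u - v) = cox n u - cox n v"
  and cox_add: "cox n (u + v) = cox n u + cox n v"
  by (simp_all add: cox_def sprod_diff sprod_add)

lemma cox_eps:
  assumes "a \<in> {1..n}"
  shows "cox n (eps a) = (if a = n then - eps 1 else eps (a + 1))"
proof -
  have "[1..<n+1] = [1..<n] @ [n]"
    using assms by simp
  then have "cox n (eps a) = sprod n [1..<n] (sref n n (eps a))"
    by (simp add: cox_def sprod_append sprod_Cons sprod_Nil)
  then show ?thesis
    using assms sprod_upt_eps[of n n a] sprod_upt_eps[of n n n]
    by (auto simp: sref_last_eps sprod_uminus)
qed

lemma sprod_upt_alpha: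
  assumes "m \<in> {1..n}"
  shows "sprod n [1..<m] (alpha n m) = (if m < n then eps 1 - eps (m + 1) else smul 2 (eps 1))"
  using assms sprod_upt_eps[of m n m] sprod_upt_eps[of m n "m + 1"]
  by (auto simp: alpha_def sprod_diff sprod_smul)

lemma sprod_rev_upt_alpha:
  assumes "m \<in> {1..n}"
  shows "sprod n (rev [m+1..<n+1]) (alpha n m) = eps m + eps n"
proof (cases "m < n")
  case True
  then show ?thesis
    using assms sprod_rev_upt_eps[of "m + 1" n m] sprod_rev_upt_eps[of "m + 1" n "m + 1"]
    by (simp add: alpha_def sprod_diff)
next
  case False
  then show ?thesis
    using assms by (simp add: sprod_Nil alpha_def smul_two)
qed

lemma tau_neg_alpha:
  assumes "m \<in> {1..n}"
  shows "tau n (- alpha n m) = sprod n [1..<m] (alpha n m)"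
proof -
  have "(SOME i. i \<in> {1..n} \<and> - alpha n m = - alpha n i) = m"
    using assms alpha_inj by (intro some_equality) auto
  then show ?thesis
    using assms unfolding tau_def by (auto simp: Let_def)
qed

lemma tau_eps_add_eps_last:
  assumes "m \<in> {1..n}"
  shows "tau n (eps m + eps n) = - alpha n m"
proof -
  have eps_add_eps_last_inj: "i = m" if "eps i + eps n = eps m + eps n" for i
    using fun_cong[OF that, of m] by (auto simp: eps_def split: if_splits)
  have "(SOME i. i \<in> {1..n} \<and> eps m + eps n = sprod n (rev [i+1..<n+1]) (alpha n i)) = m"
  proof (rule some_equality)
    fix i
    assume "i \<in> {1..n} \<and> eps m + eps n = sprod n (rev [i+1..<n+1]) (alpha n i)"
    then show "i = m"
      using eps_add_eps_last_inj sprod_rev_upt_alpha by metis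
  qed (use assms(1) sprod_rev_upt_alpha in simp)
  moreover have "\<exists>i\<in>{1..n}. eps m + eps n = sprod n (rev [i+1..<n+1]) (alpha n i)"
    using assms(1) sprod_rev_upt_alpha by metis
  moreover have "\<not> (\<exists>i\<in>{1..n}. eps m + eps n = - alpha n i)"
    using neq_neg_alpha_if_prefix_sums_nonneg[of "eps m + eps n"] by (auto simp: prefix_sum_add prefix_sum_eps)
  ultimately show ?thesis
    unfolding tau_def by (simp add: Let_def)
qed

lemma tau_eq_cox:
  assumes "\<forall>i\<in>{1..n}. b \<noteq> - alpha n i" "\<forall>i\<in>{1..n}. b \<noteq> eps i + eps n"
  shows "tau n b = cox n b"
proof -
  have "\<not> (\<exists>i\<in>{1..n}. b = sprod n (rev [i+1..<n+1]) (alpha n i))"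
    using assms(2) sprod_rev_upt_alpha by auto
  then show ?thesis
    unfolding tau_def using assms(1) by simp
qed

section \<open>The array of almost positive roots\<close>

definition off_diag :: "nat \<Rightarrow> nat \<Rightarrow> nat \<Rightarrow> bool" where
  "off_diag n i j \<longleftrightarrow> i \<in> {1..n+1} \<and> j \<in> {1..n+1} \<and> i \<noteq> j"

lemma entry_first_row: "entry n 1 (m + 1) = - alpha n m"
  by (simp add: entry_def)

lemma prefix_sum_entry_nonneg: "off_diag n i j \<Longrightarrow> 2 \<le> i \<Longrightarrow> 0 \<le> prefix_sum (entry n i j) m"
  by (auto simp: entry_def off_diag_def prefix_sum_diff prefix_sum_add prefix_sum_eps)

lemma entry_neq_neg_alpha: "off_diag n i j \<Longrightarrow> 2 \<le> i \<Longrightarrow> m \<in> {1..n} \<Longrightarrow> entry n i j \<noteq> - alpha n m"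
  using neq_neg_alpha_if_prefix_sums_nonneg prefix_sum_entry_nonneg by blast

lemma neg_simple_roots_eq_first_row: "uminus ` simple_roots n = (\<lambda>j. entry n 1 j) ` {2..n+1}"
proof -
  have "(\<lambda>j. entry n 1 j) ` {2..n+1} = (\<lambda>j. entry n 1 j) ` ((\<lambda>m. m + 1) ` {1..n})"
    by (simp add: image_add_atLeastAtMost numeral_2_eq_2)
  then show ?thesis
    unfolding simple_roots_def image_image entry_first_row by simp
qed

lemma pos_roots_subset_lower_rows:
  "pos_roots n \<subseteq> (\<lambda>(i, j). entry n i j) ` {(i, j). off_diag n i j \<and> 2 \<le> i}"
proof
  fix b
  assume "b \<in> pos_roots n"
  then consider (diff) i j where "b = eps i - eps j" "1 \<le> i" "i < j" "j \<le> n"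
    | (sum) i j where "b = eps i + eps j" "1 \<le> i" "i < j" "j \<le> n"
    | (double) i where "b = smul 2 (eps i)" "1 \<le> i" "i \<le> n"
    unfolding pos_roots_def by blast
  then show "b \<in> (\<lambda>(i, j). entry n i j) ` {(i, j). off_diag n i j \<and> 2 \<le> i}"
  proof cases
    case (diff i j)
    then have "b = entry n (i + 1) (j + 1)" "off_diag n (i + 1) (j + 1)"
      by (auto simp: entry_def off_diag_def)
    then show ?thesis using diff by (auto intro: rev_image_eqI[of "(i + 1, j + 1)"])
  next
    case (sum i j)
    then have "b = entry n (j + 1) i" "off_diag n (j + 1) i"
      by (auto simp: entry_def off_diag_def add.commute)
    then show ?thesis using sum by (auto intro: rev_image_eqI[of "(j + 1, i)"])
  next
    case (double i)
    then have "b = entry n (i + 1) i" "off_diag n (i + 1) i"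
      by (auto simp: entry_def off_diag_def smul_two)
    then show ?thesis using double by (auto intro: rev_image_eqI[of "(i + 1, i)"])
  qed
qed

lemma entry_lower_row_in_pos_roots:
  assumes ij: "off_diag n i j" "2 \<le> i"
  shows "entry n i j \<in> pos_roots n"
proof -
  consider "i < j" | "j < i - 1" | "j = i - 1"
    using ij by (force simp: off_diag_def)
  then show ?thesis
  proof cases
    case 1
    then have "entry n i j = eps (i - 1) - eps (j - 1)" "1 \<le> i - 1 \<and> i - 1 < j - 1 \<and> j - 1 \<le> n"
      using ij by (auto simp: entry_def off_diag_def)
    then show ?thesis unfolding pos_roots_def by blast
  next
    case 2
    then have "entry n i j = eps j + eps (i - 1)" "1 \<le> j \<and> j < i - 1 \<and> i - 1 \<le> n"
      using ij by (auto simp: entry_def off_diag_def)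
    then show ?thesis unfolding pos_roots_def by blast
  next
    case 3
    then have "entry n i j = smul 2 (eps j)" "1 \<le> j \<and> j \<le> n"
      using ij by (auto simp: entry_def off_diag_def smul_two)
    then show ?thesis unfolding pos_roots_def by blast
  qed
qed

lemma pos_roots_eq_lower_rows:
  "pos_roots n = (\<lambda>(i, j). entry n i j) ` {(i, j). off_diag n i j \<and> 2 \<le> i}"
  using pos_roots_subset_lower_rows entry_lower_row_in_pos_roots by fastforce

lemma almost_pos_roots_eq_entries:
  "almost_pos_roots n = (\<lambda>(i, j). entry n i j) ` {(i, j). off_diag n i j}"
proof -
  have "{(i, j). off_diag n i j} =
      {(i, j). off_diag n i j \<and> 2 \<le> i} \<union> (\<lambda>j. (1, j)) ` {2..n+1}"
    by (auto simp: off_diag_def)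
  then show ?thesis
    unfolding almost_pos_roots_def pos_roots_eq_lower_rows neg_simple_roots_eq_first_row
    by (simp add: image_Un image_image)
qed

lemma entry_lower_row_inj:
  assumes ij: "off_diag n i j" "2 \<le> i" and kl: "off_diag n k l" "2 \<le> k"
    and eq: "entry n i j = entry n k l"
  shows "i = k \<and> j = l"
proof -
  have "prefix_sum (entry n i j) n = prefix_sum (entry n k l) n"
    using eq by simp
  then have lt_iff: "i < j \<longleftrightarrow> k < l"
    using ij kl by (auto simp: entry_def off_diag_def prefix_sum_diff prefix_sum_add prefix_sum_eps
        split: if_splits)
  show ?thesis
  proof (cases "i < j")
    case True
    then have e: "eps (i - 1) - eps (j - 1) = eps (k - 1) - eps (l - 1)"
      using eq ij kl lt_iff by (simp add: entry_def)
    have "i - 1 = k - 1" "j - 1 = l - 1"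
      using fun_cong[OF e, of "i - 1"] fun_cong[OF e, of "j - 1"] True ij(2) lt_iff
      by (auto simp: eps_def split: if_splits)
    then show ?thesis
      using ij kl by (auto simp: off_diag_def)
  next
    case False
    then have e: "eps j + eps (i - 1) = eps l + eps (k - 1)"
      using eq ij kl lt_iff by (simp add: entry_def)
    have "j < i" "l < k"
      using False lt_iff ij kl by (auto simp: off_diag_def)
    then have "j = l"
      using fun_cong[OF e, of j] fun_cong[OF e, of l] by (auto simp: eps_def split: if_splits)
    then have "i - 1 = k - 1"
      using fun_cong[OF e, of "i - 1"] by (auto simp: eps_def split: if_splits)
    then show ?thesis
      using ij kl \<open>j = l\<close> by (auto simp: off_diag_def)
  qed
qed

lemma inj_on_entry: "inj_on (\<lambda>(i, j). entry n i j) {(i, j). off_diag n i j}"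
proof (intro inj_onI, clarsimp)
  fix i j k l
  assume ij: "off_diag n i j" and kl: "off_diag n k l" and eq: "entry n i j = entry n k l"
  consider "i = 1" "k = 1" | "2 \<le> i" "2 \<le> k" | "i = 1 \<and> 2 \<le> k \<or> 2 \<le> i \<and> k = 1"
    using ij kl by (force simp: off_diag_def)
  then show "i = k \<and> j = l"
  proof cases
    case 1
    then have "alpha n (j - 1) = alpha n (l - 1)" "j - 1 \<in> {1..n}" "l - 1 \<in> {1..n}"
      using eq ij kl by (auto simp: entry_def off_diag_def)
    then have "j - 1 = l - 1"
      using alpha_inj by blast
    then show ?thesis
      using 1 ij kl by (auto simp: off_diag_def)
  next
    case 2
    then show ?thesis using entry_lower_row_inj ij kl eq by blast
  next
    case 3
    have False
    proof (cases "i = 1")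
      case True
      then have "entry n k l = - alpha n (j - 1)" "2 \<le> k" "j - 1 \<in> {1..n}"
        using 3 eq ij by (auto simp: entry_def off_diag_def)
      then show False
        using entry_neq_neg_alpha kl by blast
    next
      case False
      then have "entry n i j = - alpha n (l - 1)" "2 \<le> i" "l - 1 \<in> {1..n}"
        using 3 eq kl by (auto simp: entry_def off_diag_def)
      then show False
        using entry_neq_neg_alpha ij by blast
    qed
    then show ?thesis ..
  qed
qed

definition cyc_succ :: "nat \<Rightarrow> nat \<Rightarrow> nat" where
  "cyc_succ n x = (if x = n + 1 then 1 else x + 1)"

lemma off_diag_cyc_succ: "off_diag n i j \<Longrightarrow> off_diag n (cyc_succ n i) (cyc_succ n j)"
  by (auto simp: off_diag_def cyc_succ_def)

lemma funpow_cyc_succ: "x \<in> {1..n+1} \<Longrightarrow> (cyc_succ n ^^ r) x = (x - 1 + r) mod (n + 1) + 1"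
proof (induction r)
  case (Suc r)
  define y where "y = x - 1 + r"
  have "x - 1 + Suc r = Suc y"
    by (simp add: y_def)
  then show ?case
    using Suc unfolding y_def[symmetric] by (simp add: cyc_succ_def mod_Suc)
qed auto

lemma tau_entry_first_row:
  assumes "j \<in> {2..n+1}"
  shows "tau n (entry n 1 j) = entry n (cyc_succ n 1) (cyc_succ n j)"
proof -
  define m where "m = j - 1"
  have m: "m \<in> {1..n}" "j = m + 1"
    using assms by (auto simp: m_def)
  then have "tau n (entry n 1 j) = (if m < n then eps 1 - eps (m + 1) else smul 2 (eps 1))"
    using tau_neg_alpha[OF m(1)] sprod_upt_alpha[OF m(1)] by (simp add: entry_def)
  then show ?thesis
    using m by (auto simp: entry_def cyc_succ_def smul_two)
qed

lemma tau_entry_last_row: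
  assumes "j \<in> {1..n}"
  shows "tau n (entry n (n + 1) j) = entry n (cyc_succ n (n + 1)) (cyc_succ n j)"
  using assms tau_eps_add_eps_last[OF assms] by (auto simp: entry_def cyc_succ_def)

lemma tau_entry_middle_row:
  assumes ij: "off_diag n i j" and i: "2 \<le> i" "i \<le> n"
  shows "tau n (entry n i j) = entry n (cyc_succ n i) (cyc_succ n j)"
proof -
  have "entry n i j \<noteq> eps m + eps n" for m
  proof -
    have "entry n i j n \<le> 0"
      using ij i by (auto simp: entry_def off_diag_def eps_def)
    then show ?thesis
      by (auto simp: eps_def split: if_splits)
  qed
  then have tau_cox: "tau n (entry n i j) = cox n (entry n i j)"
    using entry_neq_neg_alpha[OF ij i(1)] by (simp add: tau_eq_cox)
  have "i - 1 \<in> {1..n}" "i - 1 \<noteq> n"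
    using i by auto
  then have cox_i: "cox n (eps (i - 1)) = eps i"
    using i by (simp add: cox_eps)
  show ?thesis
  proof (cases "i < j")
    case True
    have "j - 1 \<in> {1..n}"
      using True i ij by (auto simp: off_diag_def)
    then have "cox n (eps (j - 1)) = (if j = n + 1 then - eps 1 else eps j)"
      using ij by (auto simp: cox_eps off_diag_def)
    then show ?thesis
      using True i ij tau_cox cox_i by (auto simp: entry_def off_diag_def cyc_succ_def cox_diff)
  next
    case False
    then have "j < i" "cox n (eps j) = eps (j + 1)"
      using i ij cox_eps[of j n] by (auto simp: off_diag_def)
    then show ?thesis
      using i ij tau_cox cox_i by (auto simp: entry_def off_diag_def cyc_succ_def cox_add)
  qed
qed

lemma tau_entry:
  assumes "off_diag n i j"
  shows "tau n (entry n i j) = entry n (cyc_succ n i) (cyc_succ n j)"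
proof -
  consider "i = 1" | "i = n + 1" "i \<noteq> 1" | "2 \<le> i" "i \<le> n"
    using assms by (force simp: off_diag_def)
  then show ?thesis
  proof cases
    case 1
    then show ?thesis
      using assms tau_entry_first_row[of j n] by (auto simp: off_diag_def)
  next
    case 2
    then show ?thesis
      using assms tau_entry_last_row[of j n] by (auto simp: off_diag_def)
  qed (use assms tau_entry_middle_row in blast)
qed

lemma off_diag_funpow_cyc_succ:
  "off_diag n i j \<Longrightarrow> off_diag n ((cyc_succ n ^^ r) i) ((cyc_succ n ^^ r) j)"
  by (induction r) (simp_all add: off_diag_cyc_succ)

lemma funpow_tau_entry:
  "off_diag n i j \<Longrightarrow> (tau n ^^ r) (entry n i j) = entry n ((cyc_succ n ^^ r) i) ((cyc_succ n ^^ r) j)"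
  by (induction r) (simp_all add: tau_entry off_diag_funpow_cyc_succ)

section \<open>The compatibility degree on the array\<close>

definition offset :: "nat \<Rightarrow> nat \<Rightarrow> nat \<Rightarrow> nat" where
  "offset n i x = (if i \<le> x then x - i else x + (n + 1) - i)"

lemma offset_self: "offset n i i = 0"
  by (simp add: offset_def)

lemma offset_in_range: "i \<in> {1..n+1} \<Longrightarrow> x \<in> {1..n+1} \<Longrightarrow> x \<noteq> i \<Longrightarrow> offset n i x \<in> {1..n}"
  by (auto simp: offset_def)

lemma offset_eq_iff:
  "i \<in> {1..n+1} \<Longrightarrow> x \<in> {1..n+1} \<Longrightarrow> y \<in> {1..n+1} \<Longrightarrow> offset n i x = offset n i y \<longleftrightarrow> x = y"
  by (auto simp: offset_def)

lemma funpow_cyc_succ_offset: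
  assumes "i \<in> {1..n+1}" "x \<in> {1..n+1}"
  shows "(cyc_succ n ^^ (n + 2 - i)) x = offset n i x + 1"
proof (cases "i \<le> x")
  case True
  then have eq: "x - 1 + (n + 2 - i) = (x - i) + (n + 1)" and "x - i < n + 1"
    using assms by auto
  then show ?thesis
    using True assms unfolding funpow_cyc_succ[OF assms(2)] eq mod_add_self2 offset_def by simp
next
  case False
  then have eq: "x - 1 + (n + 2 - i) = x + (n + 1) - i" and "x + (n + 1) - i < n + 1"
    using assms by auto
  then show ?thesis
    using False assms unfolding funpow_cyc_succ[OF assms(2)] eq offset_def by simp
qed

lemma offset_cyc_succ:
  "i \<in> {1..n+1} \<Longrightarrow> x \<in> {1..n+1} \<Longrightarrow> offset n (cyc_succ n i) (cyc_succ n x) = offset n i x"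
  by (auto simp: offset_def cyc_succ_def)

definition entry_deg :: "nat \<Rightarrow> nat \<Rightarrow> nat \<Rightarrow> nat \<Rightarrow> nat \<Rightarrow> int" where
  "entry_deg n i j k l =
    (if k = i then 0
     else root_coeff n (entry n (offset n i k + 1) (offset n i l + 1)) (offset n i j))"

definition is_compat_deg :: "nat \<Rightarrow> (vec \<Rightarrow> vec \<Rightarrow> int) \<Rightarrow> bool" where
  "is_compat_deg n f \<longleftrightarrow>
      (\<forall>x\<in>almost_pos_roots n. \<forall>y\<in>almost_pos_roots n. f (tau n x) (tau n y) = f x y)
    \<and> (\<forall>a\<in>simple_roots n. \<forall>a'\<in>simple_roots n. f (- a) (- a') = 0)
    \<and> (\<forall>i\<in>{1..n}. \<forall>b\<in>pos_roots n. f (- alpha n i) b = root_coeff n b i)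
    \<and> (\<forall>x y. x \<notin> almost_pos_roots n \<or> y \<notin> almost_pos_roots n \<longrightarrow> f x y = 0)"

lemma invariant_funpow:
  assumes "g ` A \<subseteq> A" "\<forall>x\<in>A. \<forall>y\<in>A. f (g x) (g y) = f x y" "x \<in> A" "y \<in> A"
  shows "f ((g ^^ r) x) ((g ^^ r) y) = f x y"
proof -
  have "(g ^^ r) x \<in> A \<and> (g ^^ r) y \<in> A \<and> f ((g ^^ r) x) ((g ^^ r) y) = f x y"
    by (induction r) (use assms in auto)
  then show ?thesis by blast
qed

lemma entry_in_almost_pos_roots: "off_diag n i j \<Longrightarrow> entry n i j \<in> almost_pos_roots n"
  unfolding almost_pos_roots_eq_entries by auto

lemma tau_almost_pos_roots: "tau n ` almost_pos_roots n \<subseteq> almost_pos_roots n"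
proof
  fix y
  assume "y \<in> tau n ` almost_pos_roots n"
  then obtain i j where "off_diag n i j" "y = tau n (entry n i j)"
    unfolding almost_pos_roots_eq_entries by auto
  then show "y \<in> almost_pos_roots n"
    by (simp add: tau_entry off_diag_cyc_succ entry_in_almost_pos_roots)
qed

lemma is_compat_deg_entry:
  assumes f: "is_compat_deg n f" and ij: "off_diag n i j" and kl: "off_diag n k l"
  shows "f (entry n i j) (entry n k l) = entry_deg n i j k l"
proof -
  let ?r = "n + 2 - i" and ?k = "offset n i k + 1" and ?l = "offset n i l + 1"
  have i: "i \<in> {1..n+1}" and m: "offset n i j \<in> {1..n}"
    using ij offset_in_range by (auto simp: off_diag_def)
  have rot: "(cyc_succ n ^^ ?r) i = 1" "(cyc_succ n ^^ ?r) j = offset n i j + 1"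
    "(cyc_succ n ^^ ?r) k = ?k" "(cyc_succ n ^^ ?r) l = ?l"
    using funpow_cyc_succ_offset[OF i] offset_self[of n i] i ij kl by (auto simp: off_diag_def)
  have kl': "off_diag n ?k ?l"
    using off_diag_funpow_cyc_succ[OF kl, of ?r] rot by simp
  have inv: "\<forall>x\<in>almost_pos_roots n. \<forall>y\<in>almost_pos_roots n. f (tau n x) (tau n y) = f x y"
    using f by (simp add: is_compat_deg_def)
  have "f (entry n i j) (entry n k l) = f ((tau n ^^ ?r) (entry n i j)) ((tau n ^^ ?r) (entry n k l))"
    using invariant_funpow[OF tau_almost_pos_roots inv] ij kl entry_in_almost_pos_roots by metis
  also have "\<dots> = f (- alpha n (offset n i j)) (entry n ?k ?l)"
    using funpow_tau_entry[OF ij, of ?r] funpow_tau_entry[OF kl, of ?r] rot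
    by (simp add: entry_def)
  also have "\<dots> = entry_deg n i j k l"
  proof (cases "k = i")
    case True
    then have "entry n ?k ?l = - alpha n (offset n i l)" "offset n i l \<in> {1..n}"
      using kl' by (auto simp: offset_self entry_def off_diag_def)
    then show ?thesis
      using f m True by (auto simp: is_compat_deg_def entry_deg_def simple_roots_def)
  next
    case False
    then have "2 \<le> ?k"
      using i kl offset_in_range by (fastforce simp: off_diag_def)
    then have "entry n ?k ?l \<in> pos_roots n"
      using kl' by (rule entry_lower_row_in_pos_roots[rotated])
    then show ?thesis
      using f m False by (simp add: is_compat_deg_def entry_deg_def)
  qed
  finally show ?thesis .
qed

definition entry_index :: "nat \<Rightarrow> vec \<Rightarrow> nat \<times> nat" where
  "entry_index n = the_inv_into {(i, j). off_diag n i j} (\<lambda>(i, j). entry n i j)"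

lemma entry_index_entry: "off_diag n i j \<Longrightarrow> entry_index n (entry n i j) = (i, j)"
  unfolding entry_index_def using the_inv_into_f_f[OF inj_on_entry, of "(i, j)" n] by simp

definition compat_deg_formula :: "nat \<Rightarrow> vec \<Rightarrow> vec \<Rightarrow> int" where
  "compat_deg_formula n x y =
    (if x \<in> almost_pos_roots n \<and> y \<in> almost_pos_roots n
     then (case (entry_index n x, entry_index n y) of ((i, j), (k, l)) \<Rightarrow> entry_deg n i j k l)
     else 0)"

lemma compat_deg_formula_entry:
  "off_diag n i j \<Longrightarrow> off_diag n k l \<Longrightarrow>
    compat_deg_formula n (entry n i j) (entry n k l) = entry_deg n i j k l"
  by (simp add: compat_deg_formula_def entry_index_entry entry_in_almost_pos_roots)

lemma entry_deg_cyc_succ: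
  assumes "off_diag n i j" "off_diag n k l"
  shows "entry_deg n (cyc_succ n i) (cyc_succ n j) (cyc_succ n k) (cyc_succ n l) = entry_deg n i j k l"
proof -
  have "cyc_succ n k = cyc_succ n i \<longleftrightarrow> k = i"
    using assms by (auto simp: off_diag_def cyc_succ_def)
  moreover have "i \<in> {1..n+1}" "j \<in> {1..n+1}" "k \<in> {1..n+1}" "l \<in> {1..n+1}"
    using assms by (auto simp: off_diag_def)
  ultimately show ?thesis
    unfolding entry_deg_def by (simp add: offset_cyc_succ)
qed

lemma is_compat_deg_formula: "is_compat_deg n (compat_deg_formula n)"
  unfolding is_compat_deg_def
proof (intro conjI ballI allI impI)
  fix x y
  assume "x \<in> almost_pos_roots n" "y \<in> almost_pos_roots n"
  then obtain i j k l where ij: "off_diag n i j" "x = entry n i j" and kl: "off_diag n k l" "y = entry n k l"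
    unfolding almost_pos_roots_eq_entries by auto
  then show "compat_deg_formula n (tau n x) (tau n y) = compat_deg_formula n x y"
    by (simp add: tau_entry compat_deg_formula_entry off_diag_cyc_succ entry_deg_cyc_succ)
next
  fix a a'
  assume "a \<in> simple_roots n" "a' \<in> simple_roots n"
  then obtain m m' where "m \<in> {1..n}" "m' \<in> {1..n}" "a = alpha n m" "a' = alpha n m'"
    unfolding simple_roots_def by blast
  then show "compat_deg_formula n (- a) (- a') = 0"
    by (simp add: entry_first_row[symmetric] compat_deg_formula_entry off_diag_def entry_deg_def)
next
  fix m b
  assume m: "m \<in> {1..n}" and "b \<in> pos_roots n"
  then obtain k l where kl: "off_diag n k l" "2 \<le> k" "b = entry n k l"
    unfolding pos_roots_eq_lower_rows by auto
  have "offset n 1 k + 1 = k" "offset n 1 l + 1 = l" "offset n 1 (m + 1) = m"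
    using kl m by (auto simp: off_diag_def offset_def)
  then show "compat_deg_formula n (- alpha n m) b = root_coeff n b m"
    using kl m by (simp add: entry_first_row[symmetric] compat_deg_formula_entry off_diag_def entry_deg_def)
next
  fix x y
  assume "x \<notin> almost_pos_roots n \<or> y \<notin> almost_pos_roots n"
  then show "compat_deg_formula n x y = 0"
    by (auto simp: compat_deg_formula_def)
qed

lemma compat_deg_eq_formula: "compat_deg n = compat_deg_formula n"
proof -
  have unique: "f = compat_deg_formula n" if f: "is_compat_deg n f" for f
  proof (intro ext)
    fix x y
    show "f x y = compat_deg_formula n x y"
    proof (cases "x \<in> almost_pos_roots n \<and> y \<in> almost_pos_roots n")
      case True
      then obtain i j k l where "off_diag n i j" "x = entry n i j" "off_diag n k l" "y = entry n k l"
        unfolding almost_pos_roots_eq_entries by auto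
      then show ?thesis
        using is_compat_deg_entry[OF f] by (simp add: compat_deg_formula_entry)
    next
      case False
      then show ?thesis
        using f is_compat_deg_formula unfolding is_compat_deg_def by metis
    qed
  qed
  show ?thesis
    unfolding compat_deg_def is_compat_deg_def[symmetric]
    by (rule the_equality) (use is_compat_deg_formula unique in auto)
qed

lemma compat_deg_entry:
  "off_diag n i j \<Longrightarrow> off_diag n k l \<Longrightarrow> compat_deg n (entry n i j) (entry n k l) = entry_deg n i j k l"
  by (simp add: compat_deg_eq_formula compat_deg_formula_entry)

lemma root_coeff_entry:
  assumes "off_diag n a b" "2 \<le> a" "m \<in> {1..n}"
  shows "root_coeff n (entry n a b) m =
    (if a < b then of_bool (a - 1 \<le> m \<and> m < b - 1)
     else if m < n then of_bool (b \<le> m) + of_bool (a - 1 \<le> m) else 1)"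
  using assms root_coeff_eps_diff[of "a - 1" "b - 1" n] root_coeff_eps_add[of b "a - 1" n]
  by (auto simp: entry_def off_diag_def)

lemma entry_deg_exchange:
  assumes "i \<in> {1..n+1}" "j \<in> {1..n+1}" "k \<in> {1..n+1}" "l \<in> {1..n+1}"
    and "i \<noteq> j" "i \<noteq> k" "i \<noteq> l" "j \<noteq> k" "j \<noteq> l" "k \<noteq> l"
  shows "entry_deg n i j k l = 0 \<longleftrightarrow> entry_deg n i l k j \<noteq> 0"
proof -
  let ?J = "offset n i j" and ?K = "offset n i k" and ?L = "offset n i l"
  have JKL: "?J \<in> {1..n}" "?K \<in> {1..n}" "?L \<in> {1..n}" "?J \<noteq> ?K" "?J \<noteq> ?L" "?K \<noteq> ?L"
    using assms offset_in_range[of i n] offset_eq_iff[of i n] by auto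
  have "entry_deg n i j k l = (if ?K < ?L then of_bool (?K \<le> ?J \<and> ?J < ?L)
      else if ?J < n then of_bool (?L < ?J) + of_bool (?K \<le> ?J) else 1)"
    using JKL assms(6) root_coeff_entry[of n "?K + 1" "?L + 1" ?J] by (simp add: entry_deg_def off_diag_def)
  moreover have "entry_deg n i l k j = (if ?K < ?J then of_bool (?K \<le> ?L \<and> ?L < ?J)
      else if ?L < n then of_bool (?J < ?L) + of_bool (?K \<le> ?L) else 1)"
    using JKL assms(6) root_coeff_entry[of n "?K + 1" "?J + 1" ?L] by (simp add: entry_deg_def off_diag_def)
  ultimately show ?thesis
    using JKL by (auto split: if_splits)
qed

theorem lemma4p9:
  fixes n i j k l :: nat
  assumes "i \<in> {1..n+1}" and "j \<in> {1..n+1}" and "k \<in> {1..n+1}" and "l \<in> {1..n+1}"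
    and "i \<noteq> j" and "i \<noteq> k" and "i \<noteq> l" and "j \<noteq> k" and "j \<noteq> l" and "k \<noteq> l"
    and "i < k" and "j < l"
  shows "compatible n (entry n i j) (entry n k l) \<longleftrightarrow>
         \<not> compatible n (entry n i l) (entry n k j)"
proof -
  have "off_diag n i j" "off_diag n k l" "off_diag n i l" "off_diag n k j"
    using assms by (auto simp: off_diag_def)
  then show ?thesis
    unfolding compatible_def using entry_deg_exchange[OF assms(1-10)] by (simp add: compat_deg_entry)
qed

end
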